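(* Let $0<\alpha<1$. Let $(x(t))_{t\ge 0}$ be a sequence of nonnegative reals (the measured transmission attempt rates of a station) and $(\bar{x}(t))_{t\ge0}$ a sequence of positive reals (the estimated maximum fair attempt rate). Define $p(0)=0$ and, for $t\ge 0$, $$p(t+1)=\max\Big(0,\; p(t)+\alpha\Big(\tfrac{x(t)}{\bar{x}(t)}-1\Big)\Big),\qquad P_{NACK}(t)=\min\{p(t),1\}.$$ Suppose there is a constant $c$ with $0<c<1$ such that $x(t)/\bar{x}(t)\le 1-c\,P_{NACK}(t)$ for all $t>0$. Then $\lim_{t\to\infty}p(t)=0$.
   Context: This is the penalty update of an access-point policing algorithm: $p(t)$ is the accumulated penalty of the station at step $t$ and $P_{NACK}(t)$ is the probability with which the access point suppresses acknowledgements of that station's frames at step $t$. The conclusion means that for such (well-behaved) stations the policing algorithm eventually drops no acknowledgements. *)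

theory Defs
  imports Complex_Main
begin

primrec penalty :: "real \<Rightarrow> (nat \<Rightarrow> real) \<Rightarrow> (nat \<Rightarrow> real) \<Rightarrow> nat \<Rightarrow> real" where
  "penalty \<alpha> x xbar 0 = 0"
| "penalty \<alpha> x xbar (Suc t) = max 0 (penalty \<alpha> x xbar t + \<alpha> * (x t / xbar t - 1))"

definition P_NACK :: "real \<Rightarrow> (nat \<Rightarrow> real) \<Rightarrow> (nat \<Rightarrow> real) \<Rightarrow> nat \<Rightarrow> real" where
  "P_NACK \<alpha> x xbar t = min (penalty \<alpha> x xbar t) 1"

end

theory Submission
  imports Defs
begin

text \<open>For a well-behaved station each step lowers the penalty by at least
  \<open>\<alpha> c min(p, 1)\<close> (down to 0), so \<open>p\<close> is eventually non-increasing and bounded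
  below. Its limit \<open>L\<close> is a fixed point of the continuous map
  \<open>y \<mapsto> max 0 (y - \<alpha> c min y 1)\<close>, which moves every positive point strictly
  downwards, hence \<open>L = 0\<close>.\<close>

lemma LIMSEQ_zero_if_le_descending_map:
  fixes u :: "nat \<Rightarrow> real" and g :: "real \<Rightarrow> real"
  assumes g_cont: "continuous_on {0..} g"
    and g_zero: "g 0 \<le> 0"
    and g_less: "\<And>y. 0 < y \<Longrightarrow> g y < y"
    and u_nonneg: "\<And>n. 0 \<le> u n"
    and u_step: "\<And>n. u (Suc n) \<le> g (u n)"
  shows "u \<longlonglongrightarrow> 0"
proof -
  have g_le: "g y \<le> y" if "0 \<le> y" for y
    using that g_zero g_less[of y] by (cases "y = 0") auto
  have "decseq u"
    unfolding decseq_Suc_iff using u_step g_le u_nonneg order_trans by blast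
  then obtain L where u_lim: "u \<longlonglongrightarrow> L"
    using decseq_convergent[of u 0] u_nonneg by blast
  have L_nonneg: "0 \<le> L"
    using u_lim u_nonneg by (intro LIMSEQ_le_const) auto
  have "(\<lambda>n. g (u n)) \<longlonglongrightarrow> g L"
    using continuous_on_tendsto_compose[OF g_cont u_lim] L_nonneg u_nonneg by auto
  moreover have "(\<lambda>n. u (Suc n)) \<longlonglongrightarrow> L"
    using u_lim by (rule LIMSEQ_Suc)
  ultimately have "L \<le> g L"
    using u_step by (intro LIMSEQ_le) auto
  hence "L = 0"
    using L_nonneg g_less[of L] by fastforce
  thus ?thesis
    using u_lim by simp
qed

lemma penalty_nonneg: "0 \<le> penalty \<alpha> x xbar t"
  by (cases t) auto

lemma penalty_Suc_le_if_well_behaved: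
  assumes "0 \<le> \<alpha>"
    and "x t / xbar t \<le> 1 - c * P_NACK \<alpha> x xbar t"
  shows "penalty \<alpha> x xbar (Suc t)
           \<le> max 0 (penalty \<alpha> x xbar t - \<alpha> * c * min (penalty \<alpha> x xbar t) 1)"
proof -
  have "\<alpha> * (x t / xbar t - 1) \<le> \<alpha> * (- c * min (penalty \<alpha> x xbar t) 1)"
    using assms by (intro mult_left_mono) (auto simp: P_NACK_def)
  thus ?thesis
    by (auto simp: algebra_simps)
qed

theorem theorem1:
  fixes \<alpha> c :: real and x xbar :: "nat \<Rightarrow> real"
  assumes "0 < \<alpha>" and "\<alpha> < 1"
    and "\<And>t. 0 \<le> x t"
    and "\<And>t. 0 < xbar t"
    and "0 < c" and "c < 1"
    and "\<And>t. t > 0 \<Longrightarrow> x t / xbar t \<le> 1 - c * P_NACK \<alpha> x xbar t"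
  shows "penalty \<alpha> x xbar \<longlonglongrightarrow> 0"
proof -
  define p where "p = penalty \<alpha> x xbar"
  define g where "g y = max 0 (y - \<alpha> * c * min y 1)" for y :: real
  have "(\<lambda>n. p (Suc n)) \<longlonglongrightarrow> 0"
  proof (rule LIMSEQ_zero_if_le_descending_map)
    show "continuous_on {0..} g"
      unfolding g_def by (intro continuous_intros)
    show "g y < y" if "0 < y" for y
      using that assms(1,5) by (simp add: g_def)
    show "p (Suc (Suc n)) \<le> g (p (Suc n))" for n
      using penalty_Suc_le_if_well_behaved[OF _ assms(7), of "Suc n"] assms(1)
      unfolding p_def g_def by (simp del: penalty.simps)
  qed (simp_all add: g_def p_def penalty_nonneg)
  thus ?thesis
    unfolding p_def by (rule LIMSEQ_imp_Suc)
qed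

end
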